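(* Let the fading gains be i.i.d. with density $f(\gamma)=\frac{m^m\gamma^{m-1}}{\Gamma(m)}e^{-m\gamma}$ ($m>0$), let $\beta>0$ with $I_{\mathcal X}(\beta)\ge R>0$, and consider the long-term truncated water-filling scheme $\mathbf p^{\rm tw}_{\rm lt}$ with threshold $s$ and long-term power $P(s)$. If \[ d_\beta(R)=1+\Big\lfloor B\Big(1-\frac R{I_{\mathcal X}(\beta)}\Big)\Big\rfloor>\frac1m, \] then $\lim_{s\to\infty}P(s)<\infty$ while the outage probability tends to $0$; i.e. the corresponding delay-limited capacity is non-zero.
   Context: $(x)_+=\max\{x,0\}$. $I_{\mathcal X}(\rho)$ is the mutual information (bits) of the AWGN channel with SNR $\rho$ and uniform input on a discrete constellation $\mathcal X$. Long-term truncated water-filling: $\wp^{\rm tw}_b(\boldsymbol\gamma)=\min\{\beta/\gamma_b,(\eta-1/\gamma_b)_+\}$ with $\eta$ such that $\frac1B\sum_bI_{\mathcal X}(\wp^{\rm tw}_b\gamma_b)=R$; $\mathbf p^{\rm tw}_{\rm lt}(\boldsymbol\gamma)=\boldsymbol\wp^{\rm tw}(\boldsymbol\gamma)$ if $\frac1B\sum_b\wp^{\rm tw}_b(\boldsymbol\gamma)\le s$ and $\mathbf 0$ otherwise; $P(s)$ is its average power $\mathbb E[\frac1B\sum_bp^{\rm tw}_{{\rm lt},b}(\boldsymbol\gamma)]$. Outage occurs when $\frac1B\sum_bI_{\mathcal X}(p_b\gamma_b)<R$. *)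

theory Defs
  imports "HOL-Probability.Probability"
begin

(* Mutual information (bits) of the complex AWGN channel Y = sqrt(rho) X + Z,
   Z ~ CN(0,1) (density exp(-|z|^2)/pi on C), with X uniform on the finite
   constellation CX. *)
definition mi_awgn :: "complex set \<Rightarrow> real \<Rightarrow> real" where
  "mi_awgn CX \<rho> =
     log 2 (real (card CX))
     - (1 / real (card CX)) * (\<Sum>x\<in>CX.
          integral\<^sup>L lborel (\<lambda>z::complex.
             (1 / pi) * exp (- (cmod z)\<^sup>2) *
             log 2 (\<Sum>x'\<in>CX. exp (- (cmod (complex_of_real (sqrt \<rho>) * (x - x') + z))\<^sup>2
                                      + (cmod z)\<^sup>2))))"

definition wf_level :: "real \<Rightarrow> real \<Rightarrow> real \<Rightarrow> real" where
  "wf_level \<beta> \<eta> g = min (\<beta> / g) (max (\<eta> - 1 / g) 0)"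

definition wf_eta :: "complex set \<Rightarrow> nat \<Rightarrow> real \<Rightarrow> real \<Rightarrow> (nat \<Rightarrow> real) \<Rightarrow> real" where
  "wf_eta CX B R \<beta> \<gamma> = (SOME \<eta>.
      (1 / real B) * (\<Sum>b<B. mi_awgn CX (wf_level \<beta> \<eta> (\<gamma> b) * \<gamma> b)) = R)"

definition wp_tw :: "complex set \<Rightarrow> nat \<Rightarrow> real \<Rightarrow> real \<Rightarrow> (nat \<Rightarrow> real) \<Rightarrow> nat \<Rightarrow> real" where
  "wp_tw CX B R \<beta> \<gamma> b = wf_level \<beta> (wf_eta CX B R \<beta> \<gamma>) (\<gamma> b)"

definition p_tw_lt :: "complex set \<Rightarrow> nat \<Rightarrow> real \<Rightarrow> real \<Rightarrow> real \<Rightarrow> (nat \<Rightarrow> real) \<Rightarrow> nat \<Rightarrow> real" where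
  "p_tw_lt CX B R \<beta> s \<gamma> b =
     (if (1 / real B) * (\<Sum>b'<B. wp_tw CX B R \<beta> \<gamma> b') \<le> s then wp_tw CX B R \<beta> \<gamma> b else 0)"

definition nakagami_gain :: "real \<Rightarrow> real measure" where
  "nakagami_gain m = density lborel (\<lambda>g. ennreal
      (if g > 0 then m powr m * g powr (m - 1) / Gamma m * exp (- m * g) else 0))"

definition fading :: "real \<Rightarrow> nat \<Rightarrow> (nat \<Rightarrow> real) measure" where
  "fading m B = PiM {..<B} (\<lambda>_. nakagami_gain m)"

definition avg_power :: "complex set \<Rightarrow> real \<Rightarrow> nat \<Rightarrow> real \<Rightarrow> real \<Rightarrow> real \<Rightarrow> ennreal" where
  "avg_power CX m B R \<beta> s = (\<integral>\<^sup>+ \<gamma>. ennreal ((1 / real B) * (\<Sum>b<B. p_tw_lt CX B R \<beta> s \<gamma> b)) \<partial>fading m B)"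

definition outage_prob :: "complex set \<Rightarrow> real \<Rightarrow> nat \<Rightarrow> real \<Rightarrow> real \<Rightarrow> real \<Rightarrow> real" where
  "outage_prob CX m B R \<beta> s = measure (fading m B)
     {\<gamma> \<in> space (fading m B).
        (1 / real B) * (\<Sum>b<B. mi_awgn CX (p_tw_lt CX B R \<beta> s \<gamma> b * \<gamma> b)) < R}"

end

theory Submission
  imports Defs
begin

(* Let d = d_beta(R) and c the d-th smallest gain.  At
       least B+1-d blocks have gain >= c, and at full power they alone carry rate >= R; hence the
       water level, and so each block power, is at most (beta+1)/c.  This gives the pointwise
       bound  W(gamma) <= (beta+1) * sum_{|S|=d} prod_{b in S} gamma_b^(-1/d).
   (3) For Nakagami-m gains E[gamma^a] < infinity whenever m + a > 0; by independence the bound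
       of (2) is integrable exactly because d*m > 1.
   (4) An abstract truncation argument: if W <= G a.e. with G integrable, the truncated average
       power is monotone in s and bounded by E[G]; outage at threshold s forces G >= s, whose
       probability is at most E[G]/s by Markov's inequality.
*)

section \<open>Gaussian integrals on the complex plane\<close>

definition gauss_density :: "real \<Rightarrow> complex \<Rightarrow> real" where
  "gauss_density \<sigma> z = normal_density 0 \<sigma> (Re z) * normal_density 0 \<sigma> (Im z)"

lemma gauss_density_measurable [measurable]: "gauss_density \<sigma> \<in> borel_measurable borel"
  unfolding gauss_density_def[abs_def] by measurable

lemma gauss_density_nonneg: "0 \<le> gauss_density \<sigma> z"
  by (simp add: gauss_density_def)

lemma gauss_density_closed_form:
  "\<sigma> > 0 \<Longrightarrow> gauss_density \<sigma> z = exp (- (cmod z)\<^sup>2 / (2 * \<sigma>\<^sup>2)) / (2 * pi * \<sigma>\<^sup>2)"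
  unfolding gauss_density_def normal_density_def cmod_power2
  by (simp add: exp_add[symmetric] real_sqrt_mult field_simps power2_eq_square)

(* The density has total mass one: it is a product of two real normal densities. *)
lemma gauss_density_nn_integral:
  assumes "\<sigma> > 0"
  shows "(\<integral>\<^sup>+z. ennreal (gauss_density \<sigma> z) \<partial>lborel) = 1"
proof -
  have "\<And>z. ennreal (gauss_density \<sigma> z)
          = (\<Prod>b\<in>(Basis::complex set). ennreal (normal_density 0 \<sigma> (z \<bullet> b)))"
    by (simp add: gauss_density_def Basis_complex_def inner_complex_def ennreal_mult)
  then have "(\<integral>\<^sup>+z. ennreal (gauss_density \<sigma> z) \<partial>lborel)
      = (\<Prod>b\<in>(Basis::complex set). (\<integral>\<^sup>+t. ennreal (normal_density 0 \<sigma> t) \<partial>lborel))"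
    by (simp only:) (rule nn_integral_lborel_prod, auto)
  also have "(\<integral>\<^sup>+t. ennreal (normal_density 0 \<sigma> t) \<partial>lborel) = 1"
    using assms by (subst nn_integral_eq_integral) auto
  finally show ?thesis by simp
qed

lemma gauss_density_integrable: "\<sigma> > 0 \<Longrightarrow> integrable lborel (gauss_density \<sigma>)"
  by (rule integrableI_nonneg) (auto simp: gauss_density_nonneg gauss_density_nn_integral)

lemma gauss_density_integral: "\<sigma> > 0 \<Longrightarrow> integral\<^sup>L lborel (gauss_density \<sigma>) = 1"
  using gauss_density_nn_integral[of \<sigma>] gauss_density_nonneg
  by (subst integral_eq_nn_integral) auto

(* Lebesgue measure is translation invariant, so integrability and integrals survive shifts. *)
lemma integrable_translate:
  fixes f :: "'a::euclidean_space \<Rightarrow> real"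
  assumes "integrable lborel f"
  shows "integrable lborel (\<lambda>z. f (w + z))"
proof -
  have "integrable (distr lborel borel ((+) w)) f"
    using assms by (simp add: lborel_distr_plus)
  moreover have "f \<in> borel_measurable borel"
    using borel_measurable_integrable[OF assms]
    by (simp add: measurable_cong_sets[OF sets_lborel refl])
  ultimately show ?thesis by (subst (asm) integrable_distr_eq) auto
qed

lemma integral_translate:
  fixes f :: "'a::euclidean_space \<Rightarrow> real"
  assumes "f \<in> borel_measurable borel"
  shows "(\<integral>z. f (w + z) \<partial>lborel) = integral\<^sup>L lborel f"
proof -
  have "(\<integral>z. f (w + z) \<partial>lborel) = integral\<^sup>L (distr lborel borel ((+) w)) f"
    using assms by (subst integral_distr) auto
  then show ?thesis by (simp add: lborel_distr_plus)
qed

(* A nonnegative continuous integrable function that is positive at 0 has positive integral: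
   it exceeds half its value at 0 on a small square. *)
lemma integral_pos_if_continuous:
  fixes f :: "complex \<Rightarrow> real"
  assumes cont: "continuous_on UNIV f" and nonneg: "\<And>z. 0 \<le> f z" and pos: "0 < f 0"
    and int: "integrable lborel f"
  shows "0 < integral\<^sup>L lborel f"
proof -
  have "f \<midarrow>0\<rightarrow> f 0" using cont by (simp add: continuous_on_eq_continuous_at isCont_def)
  from LIM_D[OF this, of "f 0 / 2"] pos obtain \<delta> where \<delta>: "\<delta> > 0"
    and near: "\<And>z. z \<noteq> 0 \<and> norm (z - 0) < \<delta> \<Longrightarrow> norm (f z - f 0) < f 0 / 2" by auto
  have low: "f 0 / 2 \<le> f z" if "cmod z < \<delta>" for z
  proof (cases "z = 0")
    case False
    then have "\<bar>f z - f 0\<bar> < f 0 / 2" using near[of z] that by auto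
    then show ?thesis by linarith
  qed (use pos in simp)
  define r where "r = \<delta> / 2"
  have r: "r > 0" using \<delta> by (simp add: r_def)
  define Q where "Q = cbox (Complex (-r) (-r)) (Complex r r)"
  have small: "cmod z < \<delta>" if "z \<in> Q" for z
  proof -
    have "\<bar>Re z\<bar> \<le> r" "\<bar>Im z\<bar> \<le> r" using that by (auto simp: Q_def cbox_complex_eq)
    then have "(Re z)\<^sup>2 \<le> r\<^sup>2" "(Im z)\<^sup>2 \<le> r\<^sup>2"
      by (metis abs_ge_zero power2_abs power_mono)+
    then have "(cmod z)\<^sup>2 \<le> 2 * r\<^sup>2" by (simp add: cmod_power2)
    also have "\<dots> < \<delta>\<^sup>2" using \<delta> by (simp add: r_def power2_eq_square)
    finally have "(cmod z)\<^sup>2 < \<delta>\<^sup>2" .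
    then show ?thesis using \<delta> by (simp add: power_less_imp_less_base)
  qed
  have intQ: "integrable lborel (\<lambda>z. f 0 / 2 * indicator Q z)"
    using emeasure_lborel_cbox_finite
    by (intro integrable_mult_right integrable_real_indicator) (auto simp: Q_def)
  have "0 < f 0 / 2 * ((2 * r) * (2 * r))" using pos r by simp
  also have "\<dots> = (\<integral>z. f 0 / 2 * indicator Q z \<partial>lborel)"
    using r by (simp add: Q_def measure_lborel_cbox_eq Basis_complex_def inner_complex_def)
  also have "\<dots> \<le> integral\<^sup>L lborel f"
    using low[OF small] nonneg by (intro integral_mono[OF intQ int]) (simp add: indicator_def)
  finally show ?thesis .
qed

section \<open>The AWGN mutual information\<close>

definition noise_density :: "complex \<Rightarrow> real" where
  "noise_density z = (1 / pi) * exp (- (cmod z)\<^sup>2)"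

(* Sum of the likelihood ratios between all candidate symbols x' and the sent symbol x. *)
definition lr_sum :: "complex set \<Rightarrow> real \<Rightarrow> complex \<Rightarrow> complex \<Rightarrow> real" where
  "lr_sum CX \<rho> x z =
     (\<Sum>x'\<in>CX. exp (- (cmod (complex_of_real (sqrt \<rho>) * (x - x') + z))\<^sup>2 + (cmod z)\<^sup>2))"

lemma mi_awgn_alt:
  "mi_awgn CX \<rho> = log 2 (real (card CX))
     - (1 / real (card CX)) * (\<Sum>x\<in>CX. \<integral>z. noise_density z * log 2 (lr_sum CX \<rho> x z) \<partial>lborel)"
  unfolding mi_awgn_def noise_density_def lr_sum_def by simp

lemma noise_density_gauss: "noise_density = gauss_density (sqrt (1/2))"
  by (rule ext) (simp add: gauss_density_closed_form noise_density_def)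

lemma noise_density_measurable [measurable]: "noise_density \<in> borel_measurable borel"
  unfolding noise_density_def[abs_def] by measurable

lemma lr_sum_measurable [measurable]: "lr_sum CX \<rho> x \<in> borel_measurable borel"
  unfolding lr_sum_def[abs_def] by measurable

lemma noise_density_pos: "0 < noise_density z"
  by (simp add: noise_density_def)

lemma noise_density_integrable: "integrable lborel noise_density"
  unfolding noise_density_gauss by (rule gauss_density_integrable) simp

lemma noise_density_integral: "integral\<^sup>L lborel noise_density = 1"
  unfolding noise_density_gauss by (rule gauss_density_integral) simp

lemma noise_density_shift_integrable: "integrable lborel (\<lambda>z. noise_density (w + z))"
  unfolding noise_density_gauss
  by (rule integrable_translate[OF gauss_density_integrable]) simp

lemma noise_density_shift_integral: "(\<integral>z. noise_density (w + z) \<partial>lborel) = 1"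
  unfolding noise_density_gauss
  by (subst integral_translate) (auto simp: gauss_density_integral)

lemma noise_density_lr_sum:
  "noise_density z * lr_sum CX \<rho> x z
     = (\<Sum>x'\<in>CX. noise_density (complex_of_real (sqrt \<rho>) * (x - x') + z))"
  unfolding lr_sum_def noise_density_def sum_distrib_left
  by (intro sum.cong refl) (simp add: exp_add[symmetric])

lemma lr_sum_ge_1: assumes "finite CX" "x \<in> CX" shows "1 \<le> lr_sum CX \<rho> x z"
proof -
  have "(\<lambda>x'. exp (- (cmod (complex_of_real (sqrt \<rho>) * (x - x') + z))\<^sup>2 + (cmod z)\<^sup>2)) x
          \<le> lr_sum CX \<rho> x z"
    unfolding lr_sum_def by (rule member_le_sum) (use assms in auto)
  then show ?thesis by simp
qed

(* The integrand of I is nonnegative and dominated, via log t <= t / ln 2, by a finite sum of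
   shifted Gaussian densities. *)
lemma info_integrand_bounds:
  assumes "finite CX" "x \<in> CX"
  shows "0 \<le> noise_density z * log 2 (lr_sum CX \<rho> x z)"
    and "noise_density z * log 2 (lr_sum CX \<rho> x z)
           \<le> (\<Sum>x'\<in>CX. noise_density (complex_of_real (sqrt \<rho>) * (x - x') + z)) / ln 2"
proof -
  have T: "1 \<le> lr_sum CX \<rho> x z" by (rule lr_sum_ge_1[OF assms])
  then show "0 \<le> noise_density z * log 2 (lr_sum CX \<rho> x z)"
    using noise_density_pos[of z] by simp
  have "log 2 (lr_sum CX \<rho> x z) \<le> lr_sum CX \<rho> x z / ln 2"
    using ln_le_minus_one[of "lr_sum CX \<rho> x z"] T
    by (simp add: log_def divide_right_mono)
  then have "noise_density z * log 2 (lr_sum CX \<rho> x z)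
               \<le> noise_density z * (lr_sum CX \<rho> x z / ln 2)"
    using noise_density_pos[of z] by (intro mult_left_mono) auto
  then show "noise_density z * log 2 (lr_sum CX \<rho> x z)
           \<le> (\<Sum>x'\<in>CX. noise_density (complex_of_real (sqrt \<rho>) * (x - x') + z)) / ln 2"
    by (simp add: noise_density_lr_sum[symmetric])
qed

lemma info_integrand_integrable:
  assumes "finite CX" "x \<in> CX"
  shows "integrable lborel (\<lambda>z. noise_density z * log 2 (lr_sum CX \<rho> x z))"
proof (rule Bochner_Integration.integrable_bound)
  show "integrable lborel
          (\<lambda>z. (\<Sum>x'\<in>CX. noise_density (complex_of_real (sqrt \<rho>) * (x - x') + z)) / ln 2)"
    by (intro integrable_divide Bochner_Integration.integrable_sum noise_density_shift_integrable)
  show "AE z in lborel. norm (noise_density z * log 2 (lr_sum CX \<rho> x z))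
      \<le> norm ((\<Sum>x'\<in>CX. noise_density (complex_of_real (sqrt \<rho>) * (x - x') + z)) / ln 2)"
    using info_integrand_bounds[OF assms] noise_density_pos
    by (intro AE_I2) (simp add: sum_nonneg less_imp_le)
qed simp

lemma mi_awgn_zero: assumes "finite CX" "CX \<noteq> {}" shows "mi_awgn CX 0 = 0"
proof -
  have "lr_sum CX 0 x z = real (card CX)" for x z by (simp add: lr_sum_def)
  then show ?thesis
    using assms by (simp add: mi_awgn_alt noise_density_integral)
qed

(* A one-point constellation carries no information; so I(beta) > 0 forces two points. *)
lemma card_ge_2_if_mi_awgn_pos:
  assumes "finite CX" "CX \<noteq> {}" "0 < mi_awgn CX \<beta>"
  shows "2 \<le> card CX"
proof (rule ccontr)
  assume "\<not> 2 \<le> card CX"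
  moreover have "card CX \<noteq> 0" using assms by simp
  ultimately have "card CX = 1" by linarith
  then obtain c where "CX = {c}" by (rule card_1_singletonE)
  then show False using assms(3) by (simp add: mi_awgn_def)
qed

lemma lr_sum_continuous: "continuous_on UNIV (lr_sum CX \<rho> x)"
  unfolding lr_sum_def[abs_def] by (intro continuous_intros)

lemma integral_noise_density_lr_sum:
  assumes "finite CX"
  shows "integrable lborel (\<lambda>z. noise_density z * lr_sum CX \<rho> x z)"
    and "(\<integral>z. noise_density z * lr_sum CX \<rho> x z \<partial>lborel) = real (card CX)"
  unfolding noise_density_lr_sum
  by (auto intro!: Bochner_Integration.integrable_sum noise_density_shift_integrable
           simp: Bochner_Integration.integral_sum[OF noise_density_shift_integrable]
                 noise_density_shift_integral)

lemma lr_sum_at_zero_less: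
  assumes fin: "finite CX" and x: "x \<in> CX" and card: "2 \<le> card CX" and \<rho>: "\<rho> > 0"
  shows "lr_sum CX \<rho> x 0 < real (card CX)"
proof -
  have "\<not> CX \<subseteq> {x}" using card card_mono[of "{x}" CX] by auto
  then obtain y where y: "y \<in> CX" "y \<noteq> x" by auto
  have "lr_sum CX \<rho> x 0 = (\<Sum>x'\<in>CX. exp (- (cmod (complex_of_real (sqrt \<rho>) * (x - x')))\<^sup>2))"
    by (simp add: lr_sum_def)
  also have "\<dots> < (\<Sum>x'\<in>CX. 1)"
  proof (rule sum_strict_mono_ex1[OF fin])
    have "0 < cmod (complex_of_real (sqrt \<rho>) * (x - y))" using y \<rho> by (simp add: norm_mult)
    then show "\<exists>a\<in>CX. exp (- (cmod (complex_of_real (sqrt \<rho>) * (x - a)))\<^sup>2) < 1"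
      using y by (intro bexI[of _ y]) auto
  qed simp
  finally show ?thesis by simp
qed

(* The function h = phi * (T/M - 1 - ln (T/M)) is nonnegative and continuous, and positive at 0
   by the previous lemma; its integral is ln M - ln 2 * J. *)
lemma info_integral_less_log_card:
  assumes fin: "finite CX" and x: "x \<in> CX" and card: "2 \<le> card CX" and \<rho>: "\<rho> > 0"
  shows "(\<integral>z. noise_density z * log 2 (lr_sum CX \<rho> x z) \<partial>lborel) < log 2 (real (card CX))"
proof -
  define M where "M = real (card CX)"
  define T where "T = lr_sum CX \<rho> x"
  define J where "J = (\<integral>z. noise_density z * log 2 (T z) \<partial>lborel)"
  have M: "M > 0" using card by (simp add: M_def)
  have Tpos: "0 < T z" for z using lr_sum_ge_1[OF fin x, of \<rho> z] by (simp add: T_def)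
  define h where "h z = noise_density z * (T z / M - 1 - ln (T z / M))" for z
  have h_eq: "h = (\<lambda>z. noise_density z * T z / M - noise_density z
                      - ln 2 * (noise_density z * log 2 (T z)) + ln M * noise_density z)"
    using Tpos M by (intro ext) (simp add: h_def ln_div log_def algebra_simps less_imp_neq[symmetric])
  note int_log = info_integrand_integrable[OF fin x, of \<rho>, folded T_def]
  note int_T = integral_noise_density_lr_sum[OF fin, of \<rho> x, folded T_def M_def]
  have int_h: "integrable lborel h" and "integral\<^sup>L lborel h = ln M - ln 2 * J"
    unfolding h_eq J_def using M int_log int_T noise_density_integrable
    by (simp_all add: noise_density_integral)
  moreover have "0 < integral\<^sup>L lborel h"
  proof (rule integral_pos_if_continuous)
    show "continuous_on UNIV h"
      unfolding h_def[abs_def] noise_density_def[abs_def] T_def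
      using M Tpos[THEN less_imp_neq] lr_sum_continuous[of CX \<rho> x]
      by (intro continuous_intros) (auto simp: T_def)
    show "0 \<le> h z" for z
      using ln_le_minus_one[of "T z / M"] Tpos[of z] M noise_density_pos[of z] by (simp add: h_def)
    have "T 0 / M \<noteq> 1" using lr_sum_at_zero_less[OF fin x card \<rho>] M by (simp add: T_def M_def)
    then have "ln (T 0 / M) < T 0 / M - 1"
      using ln_le_minus_one[of "T 0 / M"] ln_eq_minus_one[of "T 0 / M"] Tpos[of 0] M by fastforce
    then show "0 < h 0" using noise_density_pos[of 0] by (simp add: h_def)
  qed (rule int_h)
  ultimately have "J < ln M / ln 2" by (simp add: pos_less_divide_eq mult.commute)
  then show ?thesis by (simp add: J_def T_def M_def log_def)
qed

lemma mi_awgn_pos: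
  assumes fin: "finite CX" and card: "2 \<le> card CX" and \<rho>: "\<rho> > 0"
  shows "0 < mi_awgn CX \<rho>"
proof -
  have "(\<Sum>x\<in>CX. \<integral>z. noise_density z * log 2 (lr_sum CX \<rho> x z) \<partial>lborel)
          < (\<Sum>x\<in>CX. log 2 (real (card CX)))"
    using card by (intro sum_strict_mono[OF fin] info_integral_less_log_card[OF fin _ card \<rho>]) auto
  then show ?thesis
    using card by (simp add: mi_awgn_alt pos_divide_less_eq mult.commute)
qed

(* Gaussian tail domination: a shift by at most K costs at most a factor 2 exp (K^2) against
   the wider Gaussian of deviation 1.  This uses |z|^2 <= 2 |w + z|^2 + 2 |w|^2. *)
lemma noise_density_shift_bound:
  assumes "cmod w \<le> K"
  shows "noise_density (w + z) \<le> 2 * exp (K\<^sup>2) * gauss_density 1 z"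
proof -
  have "cmod z \<le> cmod (w + z) + cmod w" using norm_triangle_ineq4[of "w + z" w] by simp
  then have "(cmod z)\<^sup>2 \<le> (cmod (w + z) + cmod w)\<^sup>2" by (intro power_mono) auto
  also have "\<dots> \<le> 2 * (cmod (w + z))\<^sup>2 + 2 * (cmod w)\<^sup>2"
    using sum_squares_ge_zero[of "cmod (w + z) - cmod w" 0] by (simp add: power2_eq_square algebra_simps)
  also have "(cmod w)\<^sup>2 \<le> K\<^sup>2" using assms by (intro power_mono) auto
  finally have "- (cmod (w + z))\<^sup>2 \<le> K\<^sup>2 + (- (cmod z)\<^sup>2 / 2)" by simp
  then have "noise_density (w + z) \<le> (1 / pi) * exp (K\<^sup>2 + (- (cmod z)\<^sup>2 / 2))"
    by (auto simp: noise_density_def intro!: divide_right_mono)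
  also have "\<dots> = 2 * exp (K\<^sup>2) * gauss_density 1 z"
    unfolding exp_add by (simp add: gauss_density_closed_form)
  finally show ?thesis .
qed

(* Each noise-averaged log-likelihood term is continuous in the SNR on [0, A]
   (dominated convergence, with the dominating function from the previous lemma). *)
lemma info_integral_continuous:
  assumes fin: "finite CX" and x: "x \<in> CX"
  shows "continuous_on {0..A} (\<lambda>\<rho>. \<integral>z. noise_density z * log 2 (lr_sum CX \<rho> x z) \<partial>lborel)"
proof (rule continuous_on_sequentiallyI)
  fix u a assume u: "\<forall>n. u n \<in> {0..A}" and lim: "u \<longlonglongrightarrow> a"
  define K where "K = sqrt A * (\<Sum>x'\<in>CX. cmod (x - x'))"
  define w where "w z = real (card CX) * (2 * exp (K\<^sup>2) * gauss_density 1 z) / ln 2" for z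
  show "(\<lambda>n. \<integral>z. noise_density z * log 2 (lr_sum CX (u n) x z) \<partial>lborel)
          \<longlonglongrightarrow> (\<integral>z. noise_density z * log 2 (lr_sum CX a x z) \<partial>lborel)"
  proof (rule Bochner_Integration.integral_dominated_convergence[where w=w])
    show "integrable lborel w"
      unfolding w_def using gauss_density_integrable[of 1] by simp
    show "AE z in lborel. (\<lambda>n. noise_density z * log 2 (lr_sum CX (u n) x z))
                          \<longlonglongrightarrow> noise_density z * log 2 (lr_sum CX a x z)"
    proof (rule AE_I2)
      fix z
      have "(\<lambda>n. lr_sum CX (u n) x z) \<longlonglongrightarrow> lr_sum CX a x z"
        unfolding lr_sum_def by (intro tendsto_intros lim)
      moreover have "0 < lr_sum CX a x z" using lr_sum_ge_1[OF fin x, of a z] by simp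
      ultimately show "(\<lambda>n. noise_density z * log 2 (lr_sum CX (u n) x z))
                          \<longlonglongrightarrow> noise_density z * log 2 (lr_sum CX a x z)"
        by (intro tendsto_intros) auto
    qed
    show "AE z in lborel. norm (noise_density z * log 2 (lr_sum CX (u n) x z)) \<le> w z" for n
    proof (intro AE_I2)
      fix z
      have un: "0 \<le> u n" "u n \<le> A" using u by auto
      have shift: "cmod (complex_of_real (sqrt (u n)) * (x - x')) \<le> K" if "x' \<in> CX" for x'
      proof -
        have "cmod (complex_of_real (sqrt (u n)) * (x - x')) = sqrt (u n) * cmod (x - x')"
          using un by (simp add: norm_mult)
        also have "\<dots> \<le> sqrt A * cmod (x - x')"
          using un by (intro mult_right_mono) auto
        also have "\<dots> \<le> K"
          unfolding K_def using un that fin by (intro mult_left_mono member_le_sum) auto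
        finally show ?thesis .
      qed
      have "norm (noise_density z * log 2 (lr_sum CX (u n) x z))
              \<le> (\<Sum>x'\<in>CX. noise_density (complex_of_real (sqrt (u n)) * (x - x') + z)) / ln 2"
        using info_integrand_bounds[OF fin x] by simp
      also have "\<dots> \<le> (\<Sum>x'\<in>CX. 2 * exp (K\<^sup>2) * gauss_density 1 z) / ln 2"
        using shift by (intro divide_right_mono sum_mono noise_density_shift_bound) auto
      also have "\<dots> = w z" by (simp add: w_def)
      finally show "norm (noise_density z * log 2 (lr_sum CX (u n) x z)) \<le> w z" .
    qed
  qed measurable
qed

lemma mi_awgn_continuous:
  assumes "finite CX"
  shows "continuous_on {0..A} (mi_awgn CX)"
  unfolding mi_awgn_alt[abs_def]
  by (intro continuous_intros info_integral_continuous assms)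

section \<open>Truncated water-filling\<close>

lemma wf_level_nonneg: "0 < g \<Longrightarrow> 0 < \<beta> \<Longrightarrow> 0 \<le> wf_level \<beta> \<eta> g"
  by (simp add: wf_level_def)

lemma wf_level_le: "wf_level \<beta> \<eta> g \<le> \<beta> / g"
  by (simp add: wf_level_def)

lemma wf_level_zero:
  assumes "0 < g" "0 < \<beta>" "\<eta> \<le> 0"
  shows "wf_level \<beta> \<eta> g = 0"
proof -
  have "0 < 1 / g" "0 < \<beta> / g" using assms by auto
  then have "\<eta> - 1 / g \<le> 0" using assms by linarith
  then have "max (\<eta> - 1 / g) 0 = 0" by (simp add: max_def)
  then show ?thesis using \<open>0 < \<beta> / g\<close> by (simp add: wf_level_def)
qed

lemma wf_level_saturated:
  assumes "0 < g" "(\<beta> + 1) / g \<le> \<eta>" "0 \<le> \<beta>"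
  shows "wf_level \<beta> \<eta> g = \<beta> / g"
proof -
  have "\<beta> / g \<le> \<eta> - 1 / g" "0 \<le> \<beta> / g"
    using assms by (simp_all add: add_divide_distrib)
  then show ?thesis by (simp add: wf_level_def)
qed

lemma wf_level_le_level:
  assumes "0 < g" "0 \<le> \<eta>"
  shows "wf_level \<beta> \<eta> g \<le> \<eta>"
proof -
  have "0 < 1 / g" using assms by simp
  then have "max (\<eta> - 1 / g) 0 \<le> \<eta>" using assms by simp
  then show ?thesis unfolding wf_level_def by linarith
qed

(* For positive gains a water level meeting the rate R exists: the average rate is continuous in
   eta, equals I(0) <= R at eta = 0 and I(beta) >= R once every block is saturated. *)
lemma wf_eta_meets_rate:
  fixes CX :: "complex set" and \<gamma> :: "nat \<Rightarrow> real"
  assumes B: "B \<ge> 1" and \<beta>: "\<beta> > 0" and R: "mi_awgn CX 0 \<le> R" "R \<le> mi_awgn CX \<beta>"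
    and cont: "continuous_on {0..\<beta>} (mi_awgn CX)"
    and gpos: "\<And>b. b < B \<Longrightarrow> 0 < \<gamma> b"
  shows "(1 / real B) * (\<Sum>b<B. mi_awgn CX (wf_level \<beta> (wf_eta CX B R \<beta> \<gamma>) (\<gamma> b) * \<gamma> b)) = R"
proof -
  define F where "F \<eta> = (1 / real B) * (\<Sum>b<B. mi_awgn CX (wf_level \<beta> \<eta> (\<gamma> b) * \<gamma> b))" for \<eta>
  define \<eta>max where "\<eta>max = (\<Sum>b<B. (\<beta> + 1) / \<gamma> b)"
  have \<eta>max: "0 \<le> \<eta>max" unfolding \<eta>max_def using gpos \<beta> by (intro sum_nonneg) (simp add: less_imp_le)
  have F0: "F 0 = mi_awgn CX 0"
    using B gpos \<beta> by (simp add: F_def wf_level_zero)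
  have "wf_level \<beta> \<eta>max (\<gamma> b) * \<gamma> b = \<beta>" if b: "b < B" for b
  proof -
    have "(\<beta> + 1) / \<gamma> b \<le> \<eta>max" unfolding \<eta>max_def
      using b gpos \<beta> by (intro member_le_sum[where f="\<lambda>b. (\<beta> + 1) / \<gamma> b"]) (auto intro: less_imp_le)
    then show ?thesis using gpos[OF b] \<beta> by (simp add: wf_level_saturated)
  qed
  then have Fmax: "F \<eta>max = mi_awgn CX \<beta>" using B by (simp add: F_def)
  have "continuous_on {0..\<eta>max} F"
    unfolding F_def
  proof (intro continuous_on_mult continuous_on_const continuous_on_sum)
    fix b assume b: "b \<in> {..<B}"
    show "continuous_on {0..\<eta>max} (\<lambda>\<eta>. mi_awgn CX (wf_level \<beta> \<eta> (\<gamma> b) * \<gamma> b))"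
    proof (rule continuous_on_compose2[OF cont])
    show "continuous_on {0..\<eta>max} (\<lambda>\<eta>. wf_level \<beta> \<eta> (\<gamma> b) * \<gamma> b)"
      unfolding wf_level_def by (intro continuous_intros)
    have "0 \<le> wf_level \<beta> \<eta> (\<gamma> b) * \<gamma> b \<and> wf_level \<beta> \<eta> (\<gamma> b) * \<gamma> b \<le> \<beta>" for \<eta>
      using wf_level_nonneg[OF gpos \<beta>, of b \<eta>] wf_level_le[of \<beta> \<eta> "\<gamma> b"] gpos[of b] b
      by (simp add: pos_le_divide_eq)
    then show "(\<lambda>\<eta>. wf_level \<beta> \<eta> (\<gamma> b) * \<gamma> b) ` {0..\<eta>max} \<subseteq> {0..\<beta>}" by auto
    qed
  qed
  then have "\<exists>\<eta>. F \<eta> = R"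
    using IVT'[of F 0 R \<eta>max] F0 Fmax R \<eta>max by auto
  then show ?thesis
    unfolding wf_eta_def using someI_ex by (simp add: F_def)
qed

lemma diversity_order_bounds:
  fixes B :: nat and R I :: real
  assumes B: "B \<ge> 1" and R: "0 < R" "R \<le> I"
  defines "d \<equiv> nat (1 + \<lfloor>real B * (1 - R / I)\<rfloor>)"
  shows "1 \<le> d" and "d \<le> B" and "real B * R \<le> real (B + 1 - d) * I"
    and "real d = real_of_int (1 + \<lfloor>real B * (1 - R / I)\<rfloor>)"
proof -
  define q where "q = R / I"
  have q: "0 < q" "q \<le> 1" using R by (auto simp: q_def)
  define k where "k = \<lfloor>real B * (1 - q)\<rfloor>"
  have k: "0 \<le> k" "k < int B" "real_of_int k \<le> real B * (1 - q)"
    using q B by (auto simp: k_def floor_less_iff)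
  have d: "int d = 1 + k" using k by (simp add: d_def k_def q_def)
  then show "1 \<le> d" "d \<le> B" using k by linarith+
  show "real d = real_of_int (1 + \<lfloor>real B * (1 - R / I)\<rfloor>)"
    using arg_cong[OF d, of real_of_int] by (simp add: k_def q_def)
  have "real B * q \<le> real (B + 1 - d)" using d k by (simp add: of_nat_diff algebra_simps)
  then have "real B * q * I \<le> real (B + 1 - d) * I" using R by (intro mult_right_mono) auto
  then show "real B * R \<le> real (B + 1 - d) * I" using R by (simp add: q_def)
qed

(* Let c be the least bound dominating the gains of some d blocks (the d-th smallest gain).
   Then at least B + 1 - d blocks have gain >= c: otherwise d blocks would lie strictly below c. *)
lemma dth_smallest_gain:
  fixes \<gamma> :: "nat \<Rightarrow> real"
  assumes d: "1 \<le> d" "d \<le> B" and gpos: "\<And>b. b < B \<Longrightarrow> 0 < \<gamma> b"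
  obtains c S where "0 < c" "S \<subseteq> {..<B}" "card S = d" "\<And>b. b \<in> S \<Longrightarrow> \<gamma> b \<le> c"
    and "B + 1 - d \<le> card {b. b < B \<and> c \<le> \<gamma> b}"
proof -
  define SS where "SS = {S. S \<subseteq> {..<B} \<and> card S = d}"
  have SS: "finite SS" "{..<d} \<in> SS"
    using d by (auto simp: SS_def intro: finite_subset[of _ "Pow {..<B}"])
  define c where "c = Min ((\<lambda>S. Max (\<gamma> ` S)) ` SS)"
  have "c \<in> (\<lambda>S. Max (\<gamma> ` S)) ` SS" unfolding c_def using SS by (intro Min_in) auto
  then obtain S where S: "S \<in> SS" "Max (\<gamma> ` S) = c" by auto
  have c_le: "c \<le> Max (\<gamma> ` T)" if "T \<in> SS" for T
    unfolding c_def using SS that by (intro Min_le) auto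
  have Sfin: "finite S" and Sne: "S \<noteq> {}" and Ssub: "S \<subseteq> {..<B}" and Scard: "card S = d"
    using S d by (auto simp: SS_def intro: finite_subset)
  have Sle: "\<gamma> b \<le> c" if "b \<in> S" for b using S Sfin that by (auto intro!: Max_ge)
  have "0 < c" using Sne Sle gpos Ssub by (force intro: less_le_trans)
  moreover have "B + 1 - d \<le> card {b. b < B \<and> c \<le> \<gamma> b}"
  proof (rule ccontr)
    define U where "U = {b. b < B \<and> c \<le> \<gamma> b}"
    assume "\<not> B + 1 - d \<le> card {b. b < B \<and> c \<le> \<gamma> b}"
    then have "d \<le> card ({..<B} - U)"
      using d by (subst card_Diff_subset) (auto simp: U_def)
    then obtain T where T: "T \<subseteq> {..<B} - U" "card T = d" "finite T"
      by (rule obtain_subset_with_card_n)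
    then have "T \<in> SS" by (auto simp: SS_def)
    moreover have "Max (\<gamma> ` T) \<in> \<gamma> ` T" using T d by (intro Max_in) auto
    then have "Max (\<gamma> ` T) < c" using T by (auto simp: U_def)
    ultimately show False using c_le by fastforce
  qed
  ultimately show ?thesis using that Ssub Scard Sle by blast
qed

(* If the saturated blocks U alone carry the total rate B R at the full rate I beta, every other
   block is silent: the remaining rates are nonnegative and sum to at most zero, and a positive
   power would give a positive rate. *)
lemma wf_other_blocks_silent:
  fixes I :: "real \<Rightarrow> real" and \<gamma> :: "nat \<Rightarrow> real"
  assumes \<beta>: "\<beta> > 0" and gpos: "\<And>b. b < B \<Longrightarrow> 0 < \<gamma> b"
    and I0: "I 0 = 0" and Ipos: "\<And>\<rho>. 0 < \<rho> \<Longrightarrow> 0 < I \<rho>"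
    and rate: "(1 / real B) * (\<Sum>b<B. I (wf_level \<beta> \<eta> (\<gamma> b) * \<gamma> b)) = R"
    and U: "U \<subseteq> {..<B}" and sat: "\<And>b. b \<in> U \<Longrightarrow> wf_level \<beta> \<eta> (\<gamma> b) = \<beta> / \<gamma> b"
    and strong: "real B * R \<le> real (card U) * I \<beta>"
    and b: "b < B" "b \<notin> U"
  shows "wf_level \<beta> \<eta> (\<gamma> b) = 0"
proof -
  define r where "r b' = I (wf_level \<beta> \<eta> (\<gamma> b') * \<gamma> b')" for b'
  have power_nonneg: "0 \<le> wf_level \<beta> \<eta> (\<gamma> b') * \<gamma> b'" if "b' < B" for b'
    using wf_level_nonneg[OF gpos[OF that] \<beta>] gpos[OF that] by simp
  have r_nonneg: "0 \<le> r b'" if "b' < B" for b'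
  proof (cases "wf_level \<beta> \<eta> (\<gamma> b') * \<gamma> b' = 0")
    case False
    then have "0 < wf_level \<beta> \<eta> (\<gamma> b') * \<gamma> b'" using power_nonneg[OF that] by linarith
    then show ?thesis unfolding r_def using Ipos less_imp_le by blast
  next
    case True
    then show ?thesis by (simp only: r_def I0)
  qed
  have r_U: "r b' = I \<beta>" if "b' \<in> U" for b'
    using sat[OF that] gpos[of b'] U that by (auto simp: r_def)
  have "(\<Sum>b'<B. r b') = (\<Sum>b'\<in>U. r b') + (\<Sum>b'\<in>{..<B} - U. r b')"
    using U by (simp add: sum.subset_diff)
  moreover have "(\<Sum>b'\<in>U. r b') = real (card U) * I \<beta>" using r_U by simp
  moreover have "(\<Sum>b'<B. r b') = real B * R"
    using rate b unfolding r_def by (simp add: field_simps)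
  ultimately have "(\<Sum>b'\<in>{..<B} - U. r b') \<le> 0" using strong by linarith
  then have "r b = 0"
    using b r_nonneg sum_nonneg_eq_0_iff[of "{..<B} - U" r] sum_nonneg[of "{..<B} - U" r]
    by (simp add: antisym)
  then have "\<not> 0 < wf_level \<beta> \<eta> (\<gamma> b) * \<gamma> b"
    using Ipos unfolding r_def by force
  then show ?thesis
    using wf_level_nonneg[OF gpos[OF b(1)] \<beta>, of \<eta>] gpos[OF b(1)]
    by (simp add: zero_less_mult_iff)
qed

(* If the blocks in U have gain >= c and at full power alone carry rate >= B R, then a water level
   meeting the rate allocates at most (beta+1)/c to every block: either the level itself is below
   (beta+1)/c, or all blocks of U saturate (at power beta/gamma_b <= beta/c) and the other blocks
   are silent. *)
lemma wf_level_bounded: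
  fixes I :: "real \<Rightarrow> real" and \<gamma> :: "nat \<Rightarrow> real"
  assumes \<beta>: "\<beta> > 0" and gpos: "\<And>b. b < B \<Longrightarrow> 0 < \<gamma> b"
    and I0: "I 0 = 0" and Ipos: "\<And>\<rho>. 0 < \<rho> \<Longrightarrow> 0 < I \<rho>"
    and rate: "(1 / real B) * (\<Sum>b<B. I (wf_level \<beta> \<eta> (\<gamma> b) * \<gamma> b)) = R"
    and c: "0 < c" and U: "U \<subseteq> {..<B}" "\<And>b. b \<in> U \<Longrightarrow> c \<le> \<gamma> b"
    and strong: "real B * R \<le> real (card U) * I \<beta>"
    and b: "b < B"
  shows "wf_level \<beta> \<eta> (\<gamma> b) \<le> (\<beta> + 1) / c"
proof (cases "\<eta> \<le> (\<beta> + 1) / c")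
  case low: True
  show ?thesis
  proof (cases "0 \<le> \<eta>")
    case True
    then show ?thesis using wf_level_le_level[OF gpos[OF b] True, of \<beta>] low by linarith
  next
    case False
    then show ?thesis using wf_level_zero[OF gpos[OF b] \<beta>, of \<eta>] c \<beta> by simp
  qed
next
  case False
  have sat: "wf_level \<beta> \<eta> (\<gamma> b') = \<beta> / \<gamma> b'" if "b' \<in> U" for b'
  proof (rule wf_level_saturated)
    show gb: "0 < \<gamma> b'" using U that gpos by auto
    have "(\<beta> + 1) / \<gamma> b' \<le> (\<beta> + 1) / c"
      using U that c \<beta> gb by (intro divide_left_mono) auto
    then show "(\<beta> + 1) / \<gamma> b' \<le> \<eta>" using False by linarith
  qed (use \<beta> in simp)
  show ?thesis
  proof (cases "b \<in> U")
    case True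
    have "\<beta> / \<gamma> b \<le> \<beta> / c" using True U c \<beta> gpos[OF b] by (intro divide_left_mono) auto
    also have "\<dots> \<le> (\<beta> + 1) / c" using c by (simp add: divide_right_mono)
    finally show ?thesis using sat[OF True] by simp
  next
    case False
    then have "wf_level \<beta> \<eta> (\<gamma> b) = 0"
      using wf_other_blocks_silent[OF \<beta> gpos I0 Ipos rate U(1) sat strong b] by simp
    then show ?thesis using c \<beta> by simp
  qed
qed

lemma inverse_le_prod_powr:
  fixes S :: "nat set" and \<gamma> :: "nat \<Rightarrow> real"
  assumes "finite S" "card S = d" "1 \<le> d" "0 < c"
    and "\<And>b. b \<in> S \<Longrightarrow> \<gamma> b \<le> c" and "\<And>b. b \<in> S \<Longrightarrow> 0 < \<gamma> b"
  shows "1 / c \<le> (\<Prod>b\<in>S. \<gamma> b powr (-1 / real d))"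
proof -
  have "1 / c = c powr (real d * (-1 / real d))"
    using assms by (simp add: powr_minus_divide)
  also have "\<dots> = (\<Prod>b\<in>S. c powr (-1 / real d))"
    using assms by (simp add: powr_power)
  also have "\<dots> \<le> (\<Prod>b\<in>S. \<gamma> b powr (-1 / real d))"
    using assms by (intro prod_mono) (auto intro: powr_mono2')
  finally show ?thesis .
qed

lemma wf_power_bound:
  fixes I :: "real \<Rightarrow> real" and \<gamma> :: "nat \<Rightarrow> real"
  assumes B: "B \<ge> 1" and \<beta>: "\<beta> > 0" and R: "0 < R" "R \<le> I \<beta>"
    and I0: "I 0 = 0" and Ipos: "\<And>\<rho>. 0 < \<rho> \<Longrightarrow> 0 < I \<rho>"
    and rate: "(1 / real B) * (\<Sum>b<B. I (wf_level \<beta> \<eta> (\<gamma> b) * \<gamma> b)) = R"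
    and gpos: "\<And>b. b < B \<Longrightarrow> 0 < \<gamma> b"
  defines "d \<equiv> nat (1 + \<lfloor>real B * (1 - R / I \<beta>)\<rfloor>)"
  shows "(1 / real B) * (\<Sum>b<B. wf_level \<beta> \<eta> (\<gamma> b))
           \<le> (\<beta> + 1) * (\<Sum>S\<in>{S. S \<subseteq> {..<B} \<and> card S = d}. \<Prod>b\<in>S. \<gamma> b powr (-1 / real d))"
proof -
  note d = diversity_order_bounds[OF B R, folded d_def]
  obtain c S where c: "0 < c" and S: "S \<subseteq> {..<B}" "card S = d" "\<And>b. b \<in> S \<Longrightarrow> \<gamma> b \<le> c"
    and many: "B + 1 - d \<le> card {b. b < B \<and> c \<le> \<gamma> b}"
    by (rule dth_smallest_gain[OF d(1,2), where \<gamma> = \<gamma>]) (use gpos in auto)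
  have "real (B + 1 - d) * I \<beta> \<le> real (card {b. b < B \<and> c \<le> \<gamma> b}) * I \<beta>"
    using many R by (intro mult_right_mono) auto
  then have strong: "real B * R \<le> real (card {b. b < B \<and> c \<le> \<gamma> b}) * I \<beta>"
    using d(3) by linarith
  have "wf_level \<beta> \<eta> (\<gamma> b) \<le> (\<beta> + 1) / c" if "b < B" for b
    by (rule wf_level_bounded[OF \<beta> gpos I0 Ipos rate c _ _ strong that]) auto
  then have "(1 / real B) * (\<Sum>b<B. wf_level \<beta> \<eta> (\<gamma> b)) \<le> (\<beta> + 1) * (1 / c)"
    using sum_mono[of "{..<B}" "\<lambda>b. wf_level \<beta> \<eta> (\<gamma> b)" "\<lambda>_. (\<beta> + 1) / c"] B
    by (simp add: field_simps)
  also have "\<dots> \<le> (\<beta> + 1) * (\<Prod>b\<in>S. \<gamma> b powr (-1 / real d))"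
    using inverse_le_prod_powr[of S d c \<gamma>] S c d gpos \<beta> finite_subset[OF S(1)]
    by (intro mult_left_mono) auto
  also have "\<dots> \<le> (\<beta> + 1) * (\<Sum>S\<in>{S. S \<subseteq> {..<B} \<and> card S = d}. \<Prod>b\<in>S. \<gamma> b powr (-1 / real d))"
    using S \<beta> by (intro mult_left_mono member_le_sum)
      (auto intro: prod_nonneg finite_subset[of _ "Pow {..<B}"])
  finally show ?thesis .
qed

section \<open>Nakagami-m fading\<close>

lemma gamma_integral_scaled:
  fixes s m :: real
  assumes s: "0 < s" and m: "0 < m"
  shows "(\<integral>\<^sup>+g. ennreal (if 0 < g then g powr (s - 1) * exp (- m * g) else 0) \<partial>lborel)
       = ennreal (Gamma s / m powr s)"
proof -
  define f where "f g = ennreal (if 0 < g then g powr (s - 1) * exp (- m * g) else 0)" for g :: real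
  have f_meas: "f \<in> borel_measurable borel" unfolding f_def by measurable
  have "(\<integral>\<^sup>+g. f g \<partial>lborel) = ennreal (1 / m) * (\<integral>\<^sup>+x. f (0 + (1 / m) * x) \<partial>lborel)"
    using nn_integral_real_affine[OF f_meas, of "1 / m" 0] m by simp
  also have "(\<lambda>x. f (0 + (1 / m) * x))
      = (\<lambda>x. ennreal (m powr (1 - s)) * ennreal (indicator {0..} x * x powr (s - 1) / exp x))"
  proof
    fix x :: real
    show "f (0 + (1 / m) * x)
            = ennreal (m powr (1 - s)) * ennreal (indicator {0..} x * x powr (s - 1) / exp x)"
    proof (cases "0 < x")
      case True
      have "(x / m) powr (s - 1) = m powr (1 - s) * x powr (s - 1)"
        using True m by (simp add: powr_divide powr_diff powr_minus_divide field_simps)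
      then show ?thesis
        using True m by (simp add: f_def exp_minus field_simps ennreal_mult[symmetric])
    next
      case False
      then have "\<not> 0 < (1 / m) * x" using m by (simp add: zero_less_divide_iff)
      then show ?thesis using False by (cases "x = 0") (auto simp: f_def indicator_def)
    qed
  qed
  also have "(\<integral>\<^sup>+x. ennreal (m powr (1 - s)) * ennreal (indicator {0..} x * x powr (s - 1) / exp x) \<partial>lborel)
      = ennreal (m powr (1 - s)) * ennreal (Gamma s)"
    by (subst nn_integral_cmult) (auto simp: Gamma_conv_nn_integral_real[OF s])
  also have "ennreal (1 / m) * (ennreal (m powr (1 - s)) * ennreal (Gamma s)) = ennreal (Gamma s / m powr s)"
    using m s by (simp add: ennreal_mult[symmetric] Gamma_real_pos powr_diff less_imp_le)
  finally show ?thesis by (simp add: f_def)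
qed

definition nakagami_density :: "real \<Rightarrow> real \<Rightarrow> real" where
  "nakagami_density m g = (if g > 0 then m powr m * g powr (m - 1) / Gamma m * exp (- m * g) else 0)"

lemma nakagami_gain_density: "nakagami_gain m = density lborel (\<lambda>g. ennreal (nakagami_density m g))"
  by (simp add: nakagami_gain_def nakagami_density_def)

lemma nakagami_AE_pos: "AE g in nakagami_gain m. 0 < g"
  unfolding nakagami_gain_density by (subst AE_density) (auto simp: nakagami_density_def)

lemma nakagami_moment:
  fixes m a :: real
  assumes m: "0 < m" and a: "0 < m + a"
  shows "(\<integral>\<^sup>+g. ennreal (g powr a) \<partial>nakagami_gain m) = ennreal (Gamma (m + a) / (Gamma m * m powr a))"
proof -
  have G: "0 < Gamma m" using m by (simp add: Gamma_real_pos)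
  have "(\<integral>\<^sup>+g. ennreal (g powr a) \<partial>nakagami_gain m)
      = (\<integral>\<^sup>+g. ennreal (nakagami_density m g) * ennreal (g powr a) \<partial>lborel)"
    unfolding nakagami_gain_density
    by (rule nn_integral_density) (auto simp: nakagami_density_def)
  also have "\<dots> = (\<integral>\<^sup>+g. ennreal (m powr m / Gamma m)
          * ennreal (if 0 < g then g powr ((m + a) - 1) * exp (- m * g) else 0) \<partial>lborel)"
    using G by (intro nn_integral_cong)
      (auto simp: nakagami_density_def ennreal_mult[symmetric] powr_add[symmetric] field_simps)
  also have "\<dots> = ennreal (m powr m / Gamma m) * ennreal (Gamma (m + a) / m powr (m + a))"
    using gamma_integral_scaled[OF a m] by (simp add: nn_integral_cmult)
  also have "\<dots> = ennreal (Gamma (m + a) / (Gamma m * m powr a))"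
    using m a G by (simp add: ennreal_mult[symmetric] Gamma_real_pos powr_add field_simps)
  finally show ?thesis .
qed

lemma nakagami_prob_space: assumes m: "0 < m" shows "prob_space (nakagami_gain m)"
proof
  have "emeasure (nakagami_gain m) (space (nakagami_gain m))
      = (\<integral>\<^sup>+g. ennreal (g powr 0) \<partial>nakagami_gain m)"
    by (auto simp: emeasure_density nakagami_gain_density nn_integral_density nakagami_density_def
             intro!: nn_integral_cong)
  also have "\<dots> = 1"
    using nakagami_moment[OF m, of 0] m by (simp add: Gamma_real_pos less_imp_neq[symmetric])
  finally show "emeasure (nakagami_gain m) (space (nakagami_gain m)) = 1" .
qed

lemma fading_prob_space: "0 < m \<Longrightarrow> prob_space (fading m B)"
  unfolding fading_def
  by (intro prob_space_PiM nakagami_prob_space)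

lemma fading_AE_pos: "0 < m \<Longrightarrow> AE \<gamma> in fading m B. \<forall>b\<in>{..<B}. 0 < \<gamma> b"
  unfolding fading_def
  by (intro eventually_ball_finite ballI AE_PiM_component nakagami_AE_pos)
    (auto intro: nakagami_prob_space)

lemma fading_component_measurable:
  "b < B \<Longrightarrow> (\<lambda>\<gamma>. \<gamma> b) \<in> measurable (fading m B) (nakagami_gain m)"
  unfolding fading_def by (intro measurable_component_singleton) auto

(* By independence of the blocks, a product of powers over S factors into |S| equal moments. *)
lemma fading_nn_integral_prod_powr:
  assumes m: "0 < m" and S: "S \<subseteq> {..<B}"
  shows "(\<integral>\<^sup>+\<gamma>. (\<Prod>b\<in>S. ennreal (\<gamma> b powr e)) \<partial>fading m B)
           = (\<integral>\<^sup>+g. ennreal (g powr e) \<partial>nakagami_gain m) ^ card S"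
proof -
  interpret N: prob_space "nakagami_gain m" by (rule nakagami_prob_space[OF m])
  interpret P: product_prob_space "\<lambda>_::nat. nakagami_gain m" "{..<B}" by unfold_locales
  define f where "f b = (\<lambda>g. if b \<in> S then ennreal (g powr e) else 1)" for b :: nat
  have f_meas: "f b \<in> borel_measurable (nakagami_gain m)" for b
    unfolding f_def by (simp add: nakagami_gain_density)
  have "(\<Prod>b\<in>S. ennreal (\<gamma> b powr e)) = (\<Prod>b\<in>{..<B}. f b (\<gamma> b))" for \<gamma> :: "nat \<Rightarrow> real"
    using S by (intro prod.mono_neutral_cong_left) (auto simp: f_def)
  then have "(\<integral>\<^sup>+\<gamma>. (\<Prod>b\<in>S. ennreal (\<gamma> b powr e)) \<partial>fading m B)
      = (\<Prod>b\<in>{..<B}. integral\<^sup>N (nakagami_gain m) (f b))"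
    unfolding fading_def using f_meas by (simp add: P.product_nn_integral_prod)
  also have "\<dots> = (\<Prod>b\<in>S. \<integral>\<^sup>+g. ennreal (g powr e) \<partial>nakagami_gain m)"
    using S N.emeasure_space_1 by (intro prod.mono_neutral_cong_right) (auto simp: f_def)
  finally show ?thesis by simp
qed

(* The diversity sum sum_{|S|=d} prod_{b in S} gamma_b^(-1/d) is integrable exactly when the
   moment E[g^(-1/d)] is finite, i.e. when d m > 1. *)
lemma diversity_sum_integrable:
  fixes m :: real and B d :: nat
  assumes m: "0 < m" and dm: "1 < real d * m"
  shows "integrable (fading m B)
           (\<lambda>\<gamma>. \<Sum>S\<in>{S. S \<subseteq> {..<B} \<and> card S = d}. \<Prod>b\<in>S. \<gamma> b powr (-1 / real d))"
proof -
  define SS where "SS = {S. S \<subseteq> {..<B} \<and> card S = d}"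
  have SS: "finite SS" unfolding SS_def by (rule finite_subset[of _ "Pow {..<B}"]) auto
  have pow_meas: "(\<lambda>\<gamma>. \<gamma> b powr e) \<in> borel_measurable (fading m B)" if "b < B" for b e
    by (rule measurable_compose[OF fading_component_measurable[OF that]])
      (simp add: nakagami_gain_density)
  have "0 < real d" using dm m by (cases d) auto
  then have "0 < m + -1 / real d" using dm by (simp add: field_simps)
  then obtain r where r: "(\<integral>\<^sup>+g. ennreal (g powr (-1 / real d)) \<partial>nakagami_gain m) = ennreal r"
    using nakagami_moment[OF m] by fastforce
  have "(\<integral>\<^sup>+\<gamma>. ennreal (\<Sum>S\<in>SS. \<Prod>b\<in>S. \<gamma> b powr (-1 / real d)) \<partial>fading m B)
      = (\<integral>\<^sup>+\<gamma>. (\<Sum>S\<in>SS. \<Prod>b\<in>S. ennreal (\<gamma> b powr (-1 / real d))) \<partial>fading m B)"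
    by (intro nn_integral_cong) (simp add: sum_ennreal prod_ennreal prod_nonneg)
  also have "\<dots> = (\<Sum>S\<in>SS. \<integral>\<^sup>+\<gamma>. (\<Prod>b\<in>S. ennreal (\<gamma> b powr (-1 / real d))) \<partial>fading m B)"
  proof (rule nn_integral_sum)
    fix S assume "S \<in> SS"
    then show "(\<lambda>\<gamma>. \<Prod>b\<in>S. ennreal (\<gamma> b powr (-1 / real d))) \<in> borel_measurable (fading m B)"
      using pow_meas by (intro borel_measurable_prod_ennreal measurable_compose[OF _ measurable_ennreal])
        (auto simp: SS_def)
  qed
  also have "\<dots> = (\<Sum>S\<in>SS. ennreal r ^ card S)"
    using fading_nn_integral_prod_powr[OF m] r by (simp add: SS_def)
  finally have "(\<integral>\<^sup>+\<gamma>. ennreal (\<Sum>S\<in>SS. \<Prod>b\<in>S. \<gamma> b powr (-1 / real d)) \<partial>fading m B) < \<infinity>"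
    using SS by (simp add: power_less_top_ennreal)
  moreover have "(\<lambda>\<gamma>. \<Sum>S\<in>SS. \<Prod>b\<in>S. \<gamma> b powr (-1 / real d)) \<in> borel_measurable (fading m B)"
    using pow_meas by (intro borel_measurable_sum borel_measurable_prod) (auto simp: SS_def)
  ultimately show ?thesis
    unfolding SS_def[symmetric] by (intro integrableI_nonneg AE_I2 sum_nonneg prod_nonneg) auto
qed

section \<open>Truncation: limiting power and vanishing outage\<close>

lemma mono_tendsto_SUP_at_top:
  fixes f :: "'a::linorder \<Rightarrow> 'b::{complete_linorder, linorder_topology}"
  assumes "mono f"
  shows "(f \<longlongrightarrow> (SUP x. f x)) at_top"
proof (rule increasing_tendsto)
  fix y assume "y < (SUP x. f x)"
  then obtain x0 where "y < f x0" by (auto simp: less_SUP_iff)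
  then have "\<forall>x\<ge>x0. y < f x" using monoD[OF assms] by (auto intro: less_le_trans)
  then show "eventually (\<lambda>x. y < f x) at_top" by (auto simp: eventually_at_top_linorder)
qed (simp add: SUP_upper)

lemma truncated_power_limit:
  fixes W G :: "'a \<Rightarrow> real"
  assumes G: "integrable M G" and dom: "AE x in M. W x \<le> G x"
  shows "\<exists>L. L < \<infinity> \<and> ((\<lambda>s. \<integral>\<^sup>+x. ennreal (if W x \<le> s then W x else 0) \<partial>M) \<longlongrightarrow> L) at_top"
proof -
  define P where "P s = (\<integral>\<^sup>+x. ennreal (if W x \<le> s then W x else 0) \<partial>M)" for s :: real
  have "mono P"
    unfolding P_def by (intro monoI nn_integral_mono) (auto intro: ennreal_leI)
  moreover have "P s \<le> (\<integral>\<^sup>+x. ennreal (G x) \<partial>M)" for s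
    unfolding P_def using dom by (intro nn_integral_mono_AE) (auto elim!: eventually_mono intro: ennreal_leI)
  then have "(SUP s. P s) \<le> (\<integral>\<^sup>+x. ennreal (G x) \<partial>M)" by (rule SUP_least)
  moreover have "(\<integral>\<^sup>+x. ennreal (G x) \<partial>M) \<le> (\<integral>\<^sup>+x. ennreal (norm (G x)) \<partial>M)"
    by (intro nn_integral_mono ennreal_leI) simp
  moreover have "(\<integral>\<^sup>+x. ennreal (norm (G x)) \<partial>M) < \<infinity>"
    using G by (simp add: integrable_iff_bounded)
  ultimately show ?thesis
    unfolding P_def[abs_def] using mono_tendsto_SUP_at_top by (blast intro: le_less_trans order_trans)
qed

(* If membership in A s forces G >= s almost surely, with G integrable and nonnegative, then
   Markov's inequality bounds the probability of A s by E[G] / s, which tends to 0. *)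
lemma exceedance_measure_tendsto_0:
  fixes G :: "'a \<Rightarrow> real"
  assumes "finite_measure M" and G: "integrable M G" "\<And>x. 0 \<le> G x"
    and exceed: "\<And>s. AE x in M. x \<in> A s \<longrightarrow> s \<le> G x"
  shows "((\<lambda>s. measure M (A s)) \<longlongrightarrow> 0) at_top"
proof (rule tendsto_sandwich[of "\<lambda>_. 0" _ _ "\<lambda>s. (\<integral>x. G x \<partial>M) / s"])
  interpret finite_measure M by fact
  have "measure M (A s) \<le> (\<integral>x. G x \<partial>M) / s" if "0 < s" for s
  proof -
    have "measure M (A s) \<le> measure M {x \<in> space M. s \<le> G x}"
      using exceed[of s] borel_measurable_integrable[OF G(1)]
      by (intro finite_measure_mono_AE) (auto elim!: eventually_mono)
    also have "\<dots> \<le> (\<integral>x. G x \<partial>M) / s"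
      using G that by (intro integral_Markov_inequality_measure) auto
    finally show ?thesis .
  qed
  then show "eventually (\<lambda>s. measure M (A s) \<le> (\<integral>x. G x \<partial>M) / s) at_top"
    by (auto simp: eventually_at_top_dense)
  show "((\<lambda>s. (\<integral>x. G x \<partial>M) / s) \<longlongrightarrow> 0) at_top"
    by (intro tendsto_divide_0[OF tendsto_const] filterlim_at_top_imp_at_infinity filterlim_ident)
qed auto

definition wf_avg_power :: "complex set \<Rightarrow> nat \<Rightarrow> real \<Rightarrow> real \<Rightarrow> (nat \<Rightarrow> real) \<Rightarrow> real" where
  "wf_avg_power CX B R \<beta> \<gamma> = (1 / real B) * (\<Sum>b<B. wp_tw CX B R \<beta> \<gamma> b)"

lemma avg_power_truncated:
  "avg_power CX m B R \<beta> s = (\<integral>\<^sup>+\<gamma>. ennreal (if wf_avg_power CX B R \<beta> \<gamma> \<le> s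
                                   then wf_avg_power CX B R \<beta> \<gamma> else 0) \<partial>fading m B)"
proof -
  have "(1 / real B) * (\<Sum>b<B. p_tw_lt CX B R \<beta> s \<gamma> b)
          = (if wf_avg_power CX B R \<beta> \<gamma> \<le> s then wf_avg_power CX B R \<beta> \<gamma> else 0)" for \<gamma>
    by (cases "wf_avg_power CX B R \<beta> \<gamma> \<le> s") (simp_all add: p_tw_lt_def wf_avg_power_def)
  then show ?thesis unfolding avg_power_def by (simp only:)
qed

(* Below the threshold the long-term scheme coincides with untruncated water-filling, which meets
   the rate; so an outage at threshold s requires the untruncated average power to exceed s. *)
lemma outage_needs_power_above_threshold:
  assumes rate: "(1 / real B) * (\<Sum>b<B. mi_awgn CX (wp_tw CX B R \<beta> \<gamma> b * \<gamma> b)) = R"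
    and outage: "(1 / real B) * (\<Sum>b<B. mi_awgn CX (p_tw_lt CX B R \<beta> s \<gamma> b * \<gamma> b)) < R"
  shows "s < wf_avg_power CX B R \<beta> \<gamma>"
proof (rule ccontr)
  assume "\<not> s < wf_avg_power CX B R \<beta> \<gamma>"
  then have "p_tw_lt CX B R \<beta> s \<gamma> b = wp_tw CX B R \<beta> \<gamma> b" for b
    by (simp add: p_tw_lt_def wf_avg_power_def)
  then show False using rate outage by simp
qed

lemma wp_tw_rate_and_power:
  fixes CX :: "complex set" and \<gamma> :: "nat \<Rightarrow> real"
  assumes CX: "finite CX" "CX \<noteq> {}" and B: "B \<ge> 1" and \<beta>: "\<beta> > 0"
    and R: "R > 0" "R \<le> mi_awgn CX \<beta>" and gpos: "\<forall>b\<in>{..<B}. 0 < \<gamma> b"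
  defines "d \<equiv> nat (1 + \<lfloor>real B * (1 - R / mi_awgn CX \<beta>)\<rfloor>)"
  shows "(1 / real B) * (\<Sum>b<B. mi_awgn CX (wp_tw CX B R \<beta> \<gamma> b * \<gamma> b)) = R"
    and "wf_avg_power CX B R \<beta> \<gamma>
           \<le> (\<beta> + 1) * (\<Sum>S\<in>{S. S \<subseteq> {..<B} \<and> card S = d}. \<Prod>b\<in>S. \<gamma> b powr (-1 / real d))"
proof -
  have gpos': "\<And>b. b < B \<Longrightarrow> 0 < \<gamma> b" using gpos by simp
  have I0: "mi_awgn CX 0 = 0" by (rule mi_awgn_zero[OF CX])
  have card: "2 \<le> card CX" by (rule card_ge_2_if_mi_awgn_pos[OF CX, of \<beta>]) (use R in linarith)
  note Ipos = mi_awgn_pos[OF CX(1) card]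
  show rate: "(1 / real B) * (\<Sum>b<B. mi_awgn CX (wp_tw CX B R \<beta> \<gamma> b * \<gamma> b)) = R"
    unfolding wp_tw_def using I0 R
    by (intro wf_eta_meets_rate[OF B \<beta> _ _ mi_awgn_continuous[OF CX(1)] gpos']) auto
  show "wf_avg_power CX B R \<beta> \<gamma>
           \<le> (\<beta> + 1) * (\<Sum>S\<in>{S. S \<subseteq> {..<B} \<and> card S = d}. \<Prod>b\<in>S. \<gamma> b powr (-1 / real d))"
    unfolding wf_avg_power_def wp_tw_def d_def
    by (rule wf_power_bound[where I = "mi_awgn CX", OF B \<beta> R I0 Ipos rate[unfolded wp_tw_def] gpos'])
qed

theorem corollary2:
  fixes CX :: "complex set" and m \<beta> R :: real and B :: nat
  assumes "finite CX" and "CX \<noteq> {}"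
    and "B \<ge> 1"
    and "m > 0" and "\<beta> > 0" and "R > 0" and "mi_awgn CX \<beta> \<ge> R"
    and "real_of_int (1 + \<lfloor>real B * (1 - R / mi_awgn CX \<beta>)\<rfloor>) > 1 / m"
  shows "(\<exists>L. L < \<infinity> \<and> ((\<lambda>s. avg_power CX m B R \<beta> s) \<longlongrightarrow> L) at_top)
       \<and> ((\<lambda>s. outage_prob CX m B R \<beta> s) \<longlongrightarrow> 0) at_top"
proof -
  define d where "d = nat (1 + \<lfloor>real B * (1 - R / mi_awgn CX \<beta>)\<rfloor>)"
  define G where "G \<gamma> = (\<beta> + 1) * (\<Sum>S\<in>{S. S \<subseteq> {..<B} \<and> card S = d}. \<Prod>b\<in>S. \<gamma> b powr (-1 / real d))"
    for \<gamma> :: "nat \<Rightarrow> real"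
  note scheme = wp_tw_rate_and_power[OF assms(1-3,5-7), folded d_def, folded G_def]
  note positive_gains = fading_AE_pos[OF assms(4), of B]
  have "1 / m < real d"
    using diversity_order_bounds(4)[OF assms(3,6,7)] assms(8) unfolding d_def by linarith
  then have "1 < real d * m" using assms(4) by (simp add: divide_less_eq)
  then have G_int: "integrable (fading m B) G"
    unfolding G_def using diversity_sum_integrable[OF assms(4)] by simp
  have G_nonneg: "0 \<le> G \<gamma>" for \<gamma> using assms(5) by (simp add: G_def sum_nonneg prod_nonneg)
  have dominated: "AE \<gamma> in fading m B. wf_avg_power CX B R \<beta> \<gamma> \<le> G \<gamma>"
    using positive_gains by (rule eventually_mono) (rule scheme(2))
  have no_outage_below_G: "s \<le> G \<gamma>"
    if pos: "\<forall>b\<in>{..<B}. 0 < \<gamma> b"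
      and outage: "(1 / real B) * (\<Sum>b<B. mi_awgn CX (p_tw_lt CX B R \<beta> s \<gamma> b * \<gamma> b)) < R"
    for s \<gamma>
    using outage_needs_power_above_threshold[OF scheme(1)[OF pos] outage] scheme(2)[OF pos] by linarith
  have outage_exceeds: "AE \<gamma> in fading m B. \<gamma> \<in> {\<gamma> \<in> space (fading m B).
      (1 / real B) * (\<Sum>b<B. mi_awgn CX (p_tw_lt CX B R \<beta> s \<gamma> b * \<gamma> b)) < R} \<longrightarrow> s \<le> G \<gamma>" for s
    using positive_gains by (rule eventually_mono) (auto intro: no_outage_below_G)
  interpret P: prob_space "fading m B" by (rule fading_prob_space[OF assms(4)])
  show ?thesis
  proof
    show "\<exists>L. L < \<infinity> \<and> ((\<lambda>s. avg_power CX m B R \<beta> s) \<longlongrightarrow> L) at_top"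
      unfolding avg_power_truncated by (rule truncated_power_limit[OF G_int dominated])
    show "((\<lambda>s. outage_prob CX m B R \<beta> s) \<longlongrightarrow> 0) at_top"
      unfolding outage_prob_def
      by (rule exceedance_measure_tendsto_0[OF P.finite_measure_axioms G_int G_nonneg outage_exceeds])
  qed
qed

end
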